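(* Let $\mathbb{G}$ be an undirected, unweighted random network model that is of finite expected degree (FED). Then $\mathbb{G}$ is uniformly sparse (US).
   Context: A random network model $\mathbb{G}$ assigns to every $n\in\mathbb{N}$ a probability distribution over graphs with $n$ nodes; $G_n$ denotes a graph sampled from it. "For all sufficiently large $n$" refers to this index. For a node $u$, $\deg(u)$ is its degree. Let $\boldsymbol{p}_n(d)$ be the probability that $\deg(u)=d$ when $G_n$ is sampled from $\mathbb{G}$ and $u$ is chosen uniformly at random from $G_n$. $\mathbb{G}$ is FED if there is a probability distribution $\boldsymbol{p}$ on $\mathbb{N}$ with finite mean such that (F1) $\lim_{n\to\infty}\boldsymbol{p}_n(d)=\boldsymbol{p}(d)$ for each $d\in\mathbb{N}$, and (F2) $\lim_{n\to\infty}\sum_d d\,\boldsymbol{p}_n(d)=\sum_d d\,\boldsymbol{p}(d)$. A set of nodes $U$ is a node cover of a set of edges $E$ if every edge of $E$ is incident with at least one node of $U$. $\mathbb{G}$ is US if for each $\epsilon>0$ there is a constant $C_\epsilon$ such that for all sufficiently large $n$ the following holds with probability at least $1-\epsilon$: for any set of $y\ge \epsilon n$ edges of $G_n$, every node cover of that set has size at least $y/C_\epsilon$. *)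

theory Defs
  imports "HOL-Probability.Probability"
begin

definition is_graph :: "nat \<Rightarrow> nat set set \<Rightarrow> bool" where
  "is_graph n E \<longleftrightarrow> (\<forall>e\<in>E. card e = 2 \<and> e \<subseteq> {..<n})"

definition random_network_model :: "(nat \<Rightarrow> nat set set pmf) \<Rightarrow> bool" where
  "random_network_model G \<longleftrightarrow> (\<forall>n. \<forall>E\<in>set_pmf (G n). is_graph n E)"

definition deg :: "nat set set \<Rightarrow> nat \<Rightarrow> nat" where
  "deg E u = card {e\<in>E. u \<in> e}"

text \<open>p_n(d): probability that a uniformly random node of G_n has degree d.\<close>
definition deg_prob :: "(nat \<Rightarrow> nat set set pmf) \<Rightarrow> nat \<Rightarrow> nat \<Rightarrow> real" where
  "deg_prob G n d =
     measure_pmf.expectation (G n) (\<lambda>E. real (card {u\<in>{..<n}. deg E u = d}) / real n)"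

definition FED :: "(nat \<Rightarrow> nat set set pmf) \<Rightarrow> bool" where
  "FED G \<longleftrightarrow> (\<exists>p :: nat \<Rightarrow> real.
      (\<forall>d. p d \<ge> 0) \<and> p sums 1 \<and> summable (\<lambda>d. real d * p d) \<and>
      (\<forall>d. (\<lambda>n. deg_prob G n d) \<longlonglongrightarrow> p d) \<and>
      (\<lambda>n. \<Sum>d. real d * deg_prob G n d) \<longlonglongrightarrow> (\<Sum>d. real d * p d))"

definition node_cover :: "nat set \<Rightarrow> nat set set \<Rightarrow> bool" where
  "node_cover U Y \<longleftrightarrow> (\<forall>e\<in>Y. e \<inter> U \<noteq> {})"

definition US :: "(nat \<Rightarrow> nat set set pmf) \<Rightarrow> bool" where
  "US G \<longleftrightarrow> (\<forall>\<epsilon>>0. \<exists>C>0. \<forall>\<^sub>F n in sequentially.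
      measure_pmf.prob (G n)
        {E. \<forall>Y\<subseteq>E. real (card Y) \<ge> \<epsilon> * real n \<longrightarrow>
              (\<forall>U\<subseteq>{..<n}. node_cover U Y \<longrightarrow> real (card U) \<ge> real (card Y) / C)}
      \<ge> 1 - \<epsilon>)"

end

theory Submission
  imports Defs
begin

text \<open>Fix \<open>\<epsilon>\<close> and truncate degrees at a level \<open>D\<close> beyond which the limiting degree
  distribution carries less than \<open>\<epsilon>\<^sup>2/4\<close> of its mean. By (F1) and (F2) the expected
  contribution of nodes of degree at least \<open>D\<close> to the mean degree of \<open>G\<^sub>n\<close> is eventually below
  \<open>\<epsilon>\<^sup>2/4\<close>, so by Markov's inequality, with probability at least \<open>1 - \<epsilon>/2\<close>, the nodes of degree at
  least \<open>D\<close> have total degree below \<open>\<epsilon> n/2\<close>. In such a graph a node cover \<open>U\<close> of \<open>y \<ge> \<epsilon> n\<close> edges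
  covers at most \<open>D |U|\<close> edges through its low-degree nodes and fewer than \<open>y/2\<close> through its
  high-degree ones, hence \<open>y \<le> 2 D |U|\<close>.\<close>

definition heavy_degree_sum :: "nat \<Rightarrow> nat \<Rightarrow> nat set set \<Rightarrow> real" where
  "heavy_degree_sum D n E = (\<Sum>u\<in>{u\<in>{..<n}. D \<le> deg E u}. real (deg E u))"

lemma heavy_degree_sum_nonneg: "0 \<le> heavy_degree_sum D n E"
  unfolding heavy_degree_sum_def by (rule sum_nonneg) simp

definition sparse_graphs :: "real \<Rightarrow> real \<Rightarrow> nat \<Rightarrow> nat set set set" where
  "sparse_graphs \<epsilon> C n = {E. \<forall>Y\<subseteq>E. real (card Y) \<ge> \<epsilon> * real n \<longrightarrow>
      (\<forall>U\<subseteq>{..<n}. node_cover U Y \<longrightarrow> real (card U) \<ge> real (card Y) / C)}"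

lemma US_iff_sparse_graphs:
  "US G \<longleftrightarrow> (\<forall>\<epsilon>>0. \<exists>C>0. \<forall>\<^sub>F n in sequentially.
      measure_pmf.prob (G n) (sparse_graphs \<epsilon> C n) \<ge> 1 - \<epsilon>)"
  unfolding US_def sparse_graphs_def ..

lemma random_network_model_edges_subset:
  assumes "random_network_model G" "E \<in> set_pmf (G n)"
  shows "E \<subseteq> Pow {..<n}"
  using assms unfolding random_network_model_def is_graph_def by blast

lemma random_network_model_finite_support:
  assumes "random_network_model G"
  shows "finite (set_pmf (G n))"
proof (rule finite_subset)
  show "set_pmf (G n) \<subseteq> Pow (Pow {..<n})"
    using random_network_model_edges_subset[OF assms] by blast
qed simp

lemma deg_le_two_power:
  assumes "E \<subseteq> Pow {..<n}"
  shows "deg E u \<le> 2 ^ n"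
proof -
  have "deg E u \<le> card E"
    unfolding deg_def by (rule card_mono) (use assms finite_subset in auto)
  also have "\<dots> \<le> card (Pow {..<n})"
    by (rule card_mono) (use assms in auto)
  finally show ?thesis by (simp add: card_Pow)
qed

lemma deg_prob_eq_0:
  assumes G: "random_network_model G" and d: "2 ^ n < d"
  shows "deg_prob G n d = 0"
proof -
  have "deg_prob G n d = measure_pmf.expectation (G n) (\<lambda>E. 0)"
    unfolding deg_prob_def
  proof (rule integral_cong_AE)
    show "AE E in measure_pmf (G n). real (card {u\<in>{..<n}. deg E u = d}) / real n = 0"
    proof (rule AE_pmfI)
      fix E assume "E \<in> set_pmf (G n)"
      then have "deg E u \<le> 2 ^ n" for u
        by (intro deg_le_two_power random_network_model_edges_subset[OF G])
      with d have "{u\<in>{..<n}. deg E u = d} = {}" by (auto simp: not_le[symmetric])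
      then show "real (card {u\<in>{..<n}. deg E u = d}) / real n = 0" by simp
    qed
  qed simp_all
  then show ?thesis by simp
qed

lemma sum_mult_card_fiber:
  fixes f :: "'a \<Rightarrow> nat"
  assumes "finite V" "finite A"
  shows "(\<Sum>d\<in>A. real d * real (card {u\<in>V. f u = d})) = (\<Sum>u\<in>{u\<in>V. f u \<in> A}. real (f u))"
proof -
  have "(\<Sum>u\<in>{u\<in>V. f u \<in> A}. real (f u))
      = (\<Sum>d\<in>A. \<Sum>u\<in>{x\<in>{u\<in>V. f u \<in> A}. f x = d}. real (f u))"
    by (rule sum.group[symmetric]) (use assms in auto)
  also have "\<dots> = (\<Sum>d\<in>A. real d * real (card {u\<in>V. f u = d}))"
  proof (rule sum.cong)
    fix d assume "d \<in> A"
    then have "{x\<in>{u\<in>V. f u \<in> A}. f x = d} = {u\<in>V. f u = d}" by auto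
    then show "(\<Sum>u\<in>{x\<in>{u\<in>V. f u \<in> A}. f x = d}. real (f u))
        = real d * real (card {u\<in>V. f u = d})" by simp
  qed simp
  finally show ?thesis ..
qed

lemma sum_deg_prob_eq_expectation:
  assumes G: "random_network_model G" and A: "finite A"
  shows "(\<Sum>d\<in>A. real d * deg_prob G n d) =
    measure_pmf.expectation (G n) (\<lambda>E. (\<Sum>u\<in>{u\<in>{..<n}. deg E u \<in> A}. real (deg E u)) / real n)"
proof -
  have "(\<Sum>d\<in>A. real d * deg_prob G n d) = measure_pmf.expectation (G n)
      (\<lambda>E. \<Sum>d\<in>A. real d * (real (card {u\<in>{..<n}. deg E u = d}) / real n))"
    unfolding deg_prob_def
    by (subst Bochner_Integration.integral_sum)
       (auto intro: integrable_measure_pmf_finite random_network_model_finite_support[OF G])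
  also have "\<dots> = measure_pmf.expectation (G n)
      (\<lambda>E. (\<Sum>u\<in>{u\<in>{..<n}. deg E u \<in> A}. real (deg E u)) / real n)"
    using sum_mult_card_fiber[of "{..<n}" A] A
    by (simp add: sum_divide_distrib[symmetric] times_divide_eq_right)
  finally show ?thesis .
qed

lemma mean_degree_tail_eq_expectation:
  assumes G: "random_network_model G"
  shows "(\<Sum>d. real d * deg_prob G n d) - (\<Sum>d<D. real d * deg_prob G n d)
    = measure_pmf.expectation (G n) (\<lambda>E. heavy_degree_sum D n E / real n)"
proof -
  define B where "B = D + 2 ^ n + 1"
  have "(\<Sum>d. real d * deg_prob G n d) = (\<Sum>d<B. real d * deg_prob G n d)"
    by (rule suminf_finite) (auto simp: B_def intro!: deg_prob_eq_0[OF G])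
  moreover have "(\<Sum>d\<in>{..<B} - {..<D}. real d * deg_prob G n d)
      = (\<Sum>d<B. real d * deg_prob G n d) - (\<Sum>d<D. real d * deg_prob G n d)"
    by (rule sum_diff) (auto simp: B_def)
  moreover have "(\<Sum>d\<in>{..<B} - {..<D}. real d * deg_prob G n d)
      = measure_pmf.expectation (G n) (\<lambda>E. heavy_degree_sum D n E / real n)"
    unfolding sum_deg_prob_eq_expectation[OF G finite_Diff[OF finite_lessThan]]
  proof (rule integral_cong_AE)
    show "AE E in measure_pmf (G n). (\<Sum>u\<in>{u\<in>{..<n}. deg E u \<in> {..<B} - {..<D}}. real (deg E u))
        / real n = heavy_degree_sum D n E / real n"
    proof (rule AE_pmfI)
      fix E assume "E \<in> set_pmf (G n)"
      then have "deg E u \<le> 2 ^ n" for u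
        by (intro deg_le_two_power random_network_model_edges_subset[OF G])
      then have "deg E u < B" for u
        unfolding B_def by (meson add_le_mono1 le_add2 le_trans less_add_one order.strict_trans2)
      then have "{u\<in>{..<n}. deg E u \<in> {..<B} - {..<D}} = {u\<in>{..<n}. D \<le> deg E u}" by auto
      then show "(\<Sum>u\<in>{u\<in>{..<n}. deg E u \<in> {..<B} - {..<D}}. real (deg E u)) / real n
          = heavy_degree_sum D n E / real n"
        unfolding heavy_degree_sum_def by simp
    qed
  qed simp_all
  ultimately show ?thesis by simp
qed

lemma FED_mean_degree_tail_eventually_less:
  assumes G: "random_network_model G" and FED: "FED G" and \<delta>: "\<delta> > 0"
  obtains D where "\<forall>\<^sub>F n in sequentially.
    measure_pmf.expectation (G n) (\<lambda>E. heavy_degree_sum D n E / real n) < \<delta>"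
proof -
  obtain p :: "nat \<Rightarrow> real" where summable: "summable (\<lambda>d. real d * p d)"
    and conv: "\<And>d. (\<lambda>n. deg_prob G n d) \<longlonglongrightarrow> p d"
    and mean_conv: "(\<lambda>n. \<Sum>d. real d * deg_prob G n d) \<longlonglongrightarrow> (\<Sum>d. real d * p d)"
    using FED unfolding FED_def by blast
  have "(\<lambda>D. (\<Sum>d. real d * p d) - (\<Sum>d<D. real d * p d)) \<longlonglongrightarrow> 0"
    using tendsto_diff[OF tendsto_const[of "\<Sum>d. real d * p d"] summable_LIMSEQ[OF summable]] by simp
  then have "\<forall>\<^sub>F D in sequentially. (\<Sum>d. real d * p d) - (\<Sum>d<D. real d * p d) < \<delta>"
    by (rule order_tendstoD(2)) (rule \<delta>)
  then obtain D where D: "(\<Sum>d. real d * p d) - (\<Sum>d<D. real d * p d) < \<delta>"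
    using eventually_happens'[OF sequentially_bot] by blast
  have "(\<lambda>n. (\<Sum>d. real d * deg_prob G n d) - (\<Sum>d<D. real d * deg_prob G n d))
      \<longlonglongrightarrow> (\<Sum>d. real d * p d) - (\<Sum>d<D. real d * p d)"
    by (intro tendsto_intros mean_conv conv)
  from order_tendstoD(2)[OF this D] show ?thesis
    by (intro that) (simp only: mean_degree_tail_eq_expectation[OF G])
qed

lemma card_covered_edges_le:
  assumes E: "finite E" and Y: "Y \<subseteq> E"
    and U: "U \<subseteq> {..<n}" and cov: "node_cover U Y"
  shows "real (card Y) \<le> real D * real (card U) + heavy_degree_sum D n E"
proof -
  have finY: "finite Y" using Y E finite_subset by blast
  have finU: "finite U" using U finite_subset by blast
  define light where "light = {u\<in>U. \<not> D \<le> deg E u}"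
  define heavy where "heavy = {u\<in>U. D \<le> deg E u}"
  have deg_Y: "card {e\<in>Y. u \<in> e} \<le> deg E u" for u
    unfolding deg_def by (rule card_mono) (use E Y in auto)
  have "Y \<subseteq> (\<Union>u\<in>U. {e\<in>Y. u \<in> e})" using cov unfolding node_cover_def by blast
  then have "card Y \<le> card (\<Union>u\<in>U. {e\<in>Y. u \<in> e})"
    by (rule card_mono[rotated]) (use finU finY in auto)
  also have "\<dots> \<le> (\<Sum>u\<in>U. card {e\<in>Y. u \<in> e})" by (rule card_UN_le[OF finU])
  finally have covered: "real (card Y) \<le> (\<Sum>u\<in>U. real (card {e\<in>Y. u \<in> e}))"
    by (simp only: of_nat_sum[symmetric] of_nat_le_iff)
  have "U = light \<union> heavy" "light \<inter> heavy = {}" by (auto simp: light_def heavy_def)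
  then have split: "(\<Sum>u\<in>U. real (card {e\<in>Y. u \<in> e}))
      = (\<Sum>u\<in>light. real (card {e\<in>Y. u \<in> e})) + (\<Sum>u\<in>heavy. real (card {e\<in>Y. u \<in> e}))"
    using finU by (simp add: sum.union_disjoint)
  have "(\<Sum>u\<in>light. real (card {e\<in>Y. u \<in> e})) \<le> (\<Sum>u\<in>light. real D)"
  proof (rule sum_mono)
    fix u assume "u \<in> light"
    then have "card {e\<in>Y. u \<in> e} < D" using deg_Y[of u] by (simp add: light_def)
    then show "real (card {e\<in>Y. u \<in> e}) \<le> real D" by simp
  qed
  also have "\<dots> \<le> real D * real (card U)"
    using card_mono[OF finU, of light] by (simp add: light_def mult.commute mult_left_mono)
  finally have light_le: "(\<Sum>u\<in>light. real (card {e\<in>Y. u \<in> e})) \<le> real D * real (card U)" .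
  have "(\<Sum>u\<in>heavy. real (card {e\<in>Y. u \<in> e})) \<le> (\<Sum>u\<in>heavy. real (deg E u))"
    by (rule sum_mono) (simp add: deg_Y)
  also have "\<dots> \<le> heavy_degree_sum D n E"
    unfolding heavy_degree_sum_def heavy_def by (rule sum_mono2) (use U in auto)
  finally show ?thesis using covered split light_le by linarith
qed

lemma sparse_graphs_if_heavy_degree_sum_less:
  assumes E: "finite E" and heavy: "heavy_degree_sum D n E < \<epsilon> * real n / 2"
  shows "E \<in> sparse_graphs \<epsilon> (2 * (real D + 1)) n"
  unfolding sparse_graphs_def
proof safe
  fix Y U assume Y: "Y \<subseteq> E" and Y_large: "\<epsilon> * real n \<le> real (card Y)"
    and U: "U \<subseteq> {..<n}" and cov: "node_cover U Y"
  from card_covered_edges_le[where D = D, OF E Y U cov] heavy Y_large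
  have "real (card Y) \<le> 2 * (real D * real (card U))" by linarith
  then have "real (card Y) \<le> 2 * (real D + 1) * real (card U)"
    by (simp add: algebra_simps)
  then show "real (card Y) / (2 * (real D + 1)) \<le> real (card U)"
    by (simp add: divide_le_eq mult.commute)
qed

lemma prob_sparse_graphs_ge:
  assumes G: "random_network_model G" and \<epsilon>: "\<epsilon> > 0" and n: "n > 0"
    and tail: "measure_pmf.expectation (G n) (\<lambda>E. heavy_degree_sum D n E / real n) < \<epsilon>\<^sup>2 / 4"
  shows "measure_pmf.prob (G n) (sparse_graphs \<epsilon> (2 * (real D + 1)) n) \<ge> 1 - \<epsilon>"
proof -
  define h where "h E = heavy_degree_sum D n E / real n" for E
  let ?bad = "{E. \<epsilon> / 2 \<le> h E}"
  have "measure_pmf.prob (G n) {E \<in> space (measure_pmf (G n)). \<epsilon> / 2 \<le> h E}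
      \<le> measure_pmf.expectation (G n) h / (\<epsilon> / 2)"
    by (rule integral_Markov_inequality_measure)
       (auto simp: h_def \<epsilon> heavy_degree_sum_nonneg
             intro!: integrable_measure_pmf_finite random_network_model_finite_support[OF G])
  also have "\<dots> \<le> (\<epsilon>\<^sup>2 / 4) / (\<epsilon> / 2)"
    using tail \<epsilon> unfolding h_def by (intro divide_right_mono) auto
  also have "\<dots> = \<epsilon> / 2" using \<epsilon> by (simp add: power2_eq_square field_simps)
  finally have bad: "measure_pmf.prob (G n) ?bad \<le> \<epsilon> / 2" by simp
  have good: "(UNIV - ?bad) \<inter> set_pmf (G n) \<subseteq> sparse_graphs \<epsilon> (2 * (real D + 1)) n"
  proof
    fix E assume E: "E \<in> (UNIV - ?bad) \<inter> set_pmf (G n)"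
    then have "finite E"
      using random_network_model_edges_subset[OF G] by (meson IntD2 finite_Pow_iff finite_lessThan finite_subset)
    moreover have "heavy_degree_sum D n E / real n < \<epsilon> / 2" using E by (simp add: h_def)
    then have "heavy_degree_sum D n E < \<epsilon> * real n / 2" using n by (simp add: pos_divide_less_eq)
    ultimately show "E \<in> sparse_graphs \<epsilon> (2 * (real D + 1)) n"
      by (rule sparse_graphs_if_heavy_degree_sum_less)
  qed
  have "1 - \<epsilon> \<le> measure_pmf.prob (G n) (UNIV - ?bad)"
    using bad \<epsilon> measure_pmf.prob_compl[of ?bad "G n"] by simp
  also have "\<dots> = measure_pmf.prob (G n) ((UNIV - ?bad) \<inter> set_pmf (G n))"
    by (rule measure_Int_set_pmf[symmetric])
  also have "\<dots> \<le> measure_pmf.prob (G n) (sparse_graphs \<epsilon> (2 * (real D + 1)) n)"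
    by (rule measure_pmf.finite_measure_mono[OF good]) simp
  finally show ?thesis .
qed

theorem lemma1:
  fixes G :: "nat \<Rightarrow> nat set set pmf"
  assumes "random_network_model G"
      and "FED G"
  shows "US G"
  unfolding US_iff_sparse_graphs
proof (intro allI impI)
  fix \<epsilon> :: real assume \<epsilon>: "\<epsilon> > 0"
  then have "\<epsilon>\<^sup>2 / 4 > 0" by simp
  then obtain D where "\<forall>\<^sub>F n in sequentially.
      measure_pmf.expectation (G n) (\<lambda>E. heavy_degree_sum D n E / real n) < \<epsilon>\<^sup>2 / 4"
    by (rule FED_mean_degree_tail_eventually_less[OF assms])
  with eventually_gt_at_top[of 0]
  have "\<forall>\<^sub>F n in sequentially.
      measure_pmf.prob (G n) (sparse_graphs \<epsilon> (2 * (real D + 1)) n) \<ge> 1 - \<epsilon>"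
    by eventually_elim (rule prob_sparse_graphs_ge[OF assms(1) \<epsilon>])
  then show "\<exists>C>0. \<forall>\<^sub>F n in sequentially. measure_pmf.prob (G n) (sparse_graphs \<epsilon> C n) \<ge> 1 - \<epsilon>"
    by (intro exI[of _ "2 * (real D + 1)"] conjI) simp_all
qed

end
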